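(* Let $U$ be a matchgate unitary on $n$ qubits, let $B=i^bC_{\vec\alpha}$ be a Hermitian Pauli observable (with $\vec\alpha$ a Majorana configuration and $b$ an integer), and let $S\subseteq\{1,\dots,n\}$. For each $s\in S$ let $\mathbf n_s\in\mathbb R^3$ be a unit vector and define the $3\times 3$ matrix $\mathbf M_s$ by the requirement that $\frac{1}{2^{n+2}}\|[\mathbf n\cdot\boldsymbol\sigma_s,U^\dagger BU]\|^2=\mathbf n^*\cdot\mathbf M_s\cdot\mathbf n$ for all $\mathbf n$. For each qubit $j\in\{1,\dots,n\}$ choose a unit Bloch vector $\mathbf n^\perp_j$, with $\mathbf n^\perp_j\perp\mathbf n_j$ for $j\in S$, and consider the product basis $\{\otimes_{j=1}^n|(-1)^{\ell_j}\mathbf n_j^\perp\rangle\}_{\boldsymbol\ell\in\{0,1\}^n}$, where $|\mathbf m\rangle$ denotes the single-qubit pure state with Bloch vector $\mathbf m$. Then $$\overline{\big|\langle U^\dagger BU\rangle-\langle(\otimes_{s\in S}\mathcal E_s)[U^\dagger BU]\rangle\big|}\le\sum_{s\in S}\sqrt{\mathbf n_s^*\cdot\mathbf M_s\cdot\mathbf n_s},$$ where $\overline{(\cdot)}$ denotes the uniform average over the $2^n$ states of this product basis (expectation values taken in each basis state), and $\mathcal E_s$ is the completely depolarizing channel on qubit $s$, $\mathcal E_s(O)=\frac14\big(O+\sum_{k\in\{x,y,z\}}\sigma^k_sO\sigma^k_s\big)$.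
   Context: On $n$ qubits, $\boldsymbol\sigma_s=(\sigma^x_s,\sigma^y_s,\sigma^z_s)=(X_s,Y_s,Z_s)$ are the Pauli operators on qubit $s$ and $\mathbf n\cdot\boldsymbol\sigma_s=\sum_k n_k\sigma^k_s$. Majorana operators: $c_{2k-1}=Z_1\cdots Z_{k-1}X_k$, $c_{2k}=Z_1\cdots Z_{k-1}Y_k$. A Majorana configuration is an ordered tuple $\vec\alpha=(\alpha_1<\dots<\alpha_k)$ with entries in $\{1,\dots,2n\}$, and $C_{\vec\alpha}=c_{\alpha_1}\cdots c_{\alpha_k}$. A matchgate unitary is a unitary $U$ on $n$ qubits for which there is $\mathbf u\in\mathbf{SO}(2n)$ with $U^\dagger c_\mu U=\sum_\nu u_{\mu\nu}c_\nu$ for all $\mu$. $\|O\|^2=\mathrm{tr}(O^\dagger O)$ is the Frobenius norm. *)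

theory Defs
  imports Complex_Main "Jordan_Normal_Form.Matrix" "Jordan_Normal_Form.Determinant"
    "Jordan_Normal_Form.Schur_Decomposition"
begin

text \<open>n-qubit operators are complex 2^n x 2^n matrices. Basis index i < 2^n;
  qubit j (1 \<le> j \<le> n) corresponds to binary digit (j-1) of i.\<close>

definition qbit :: "nat \<Rightarrow> nat \<Rightarrow> nat" where
  "qbit i j = (i div 2 ^ j) mod 2"

text \<open>Tensor product of single-qubit 2x2 matrices f 0, ..., f (n-1) (f j acts on qubit j+1).\<close>
definition tensor :: "nat \<Rightarrow> (nat \<Rightarrow> complex mat) \<Rightarrow> complex mat" where
  "tensor n f = mat (2 ^ n) (2 ^ n) (\<lambda>(i, k). \<Prod>j<n. f j $$ (qbit i j, qbit k j))"

definition embed :: "nat \<Rightarrow> nat \<Rightarrow> complex mat \<Rightarrow> complex mat" where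
  "embed n s A = tensor n (\<lambda>j. if j = s - 1 then A else 1\<^sub>m 2)"

definition pauliX :: "complex mat" where
  "pauliX = mat_of_rows_list 2 [[0, 1], [1, 0]]"
definition pauliY :: "complex mat" where
  "pauliY = mat_of_rows_list 2 [[0, - \<i>], [\<i>, 0]]"
definition pauliZ :: "complex mat" where
  "pauliZ = mat_of_rows_list 2 [[1, 0], [0, -1]]"

definition pauli :: "nat \<Rightarrow> complex mat" where
  "pauli k = (if k = 0 then pauliX else if k = 1 then pauliY else pauliZ)"

definition sigma :: "nat \<Rightarrow> nat \<Rightarrow> nat \<Rightarrow> complex mat" where
  "sigma n s k = embed n s (pauli k)"

definition ndot_sigma :: "nat \<Rightarrow> nat \<Rightarrow> (nat \<Rightarrow> real) \<Rightarrow> complex mat" where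
  "ndot_sigma n s v = (complex_of_real (v 0) \<cdot>\<^sub>m sigma n s 0) + (complex_of_real (v 1) \<cdot>\<^sub>m sigma n s 1)
      + (complex_of_real (v 2) \<cdot>\<^sub>m sigma n s 2)"

definition mat_prod_list :: "nat \<Rightarrow> complex mat list \<Rightarrow> complex mat" where
  "mat_prod_list d As = foldr (*) As (1\<^sub>m d)"

text \<open>Majorana operators c_{2k-1} = Z_1...Z_{k-1} X_k, c_{2k} = Z_1...Z_{k-1} Y_k (mu from 1 to 2n).\<close>
definition majorana :: "nat \<Rightarrow> nat \<Rightarrow> complex mat" where
  "majorana n \<mu> = (let k = (\<mu> + 1) div 2 in
     mat_prod_list (2 ^ n) (map (\<lambda>j. sigma n j 2) [1..<k] @
        [if odd \<mu> then sigma n k 0 else sigma n k 1]))"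

definition majorana_config :: "nat \<Rightarrow> nat list \<Rightarrow> bool" where
  "majorana_config n \<alpha> \<longleftrightarrow> sorted_wrt (<) \<alpha> \<and> set \<alpha> \<subseteq> {1..2 * n}"

definition majorana_prod :: "nat \<Rightarrow> nat list \<Rightarrow> complex mat" where
  "majorana_prod n \<alpha> = mat_prod_list (2 ^ n) (map (majorana n) \<alpha>)"

definition unitary_mat :: "nat \<Rightarrow> complex mat \<Rightarrow> bool" where
  "unitary_mat d U \<longleftrightarrow> U \<in> carrier_mat d d \<and> mat_adjoint U * U = 1\<^sub>m d \<and> U * mat_adjoint U = 1\<^sub>m d"

definition SO_mat :: "nat \<Rightarrow> real mat \<Rightarrow> bool" where
  "SO_mat d u \<longleftrightarrow> u \<in> carrier_mat d d \<and> u * transpose_mat u = 1\<^sub>m d \<and> det u = 1"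

text \<open>Matchgate unitary: U^dagger c_mu U = sum_nu u_{mu nu} c_nu for some u in SO(2n)
  (indices mu, nu in 1..2n correspond to matrix indices mu-1, nu-1).\<close>
definition matchgate :: "nat \<Rightarrow> complex mat \<Rightarrow> bool" where
  "matchgate n U \<longleftrightarrow> unitary_mat (2 ^ n) U \<and>
     (\<exists>u. SO_mat (2 * n) u \<and>
        (\<forall>\<mu>\<in>{1..2 * n}. mat_adjoint U * majorana n \<mu> * U =
            foldr (+) (map (\<lambda>\<nu>. complex_of_real (u $$ (\<mu> - 1, \<nu> - 1)) \<cdot>\<^sub>m majorana n \<nu>) [1..<2 * n + 1]) (0\<^sub>m (2 ^ n) (2 ^ n))))"

definition mtrace :: "complex mat \<Rightarrow> complex" where
  "mtrace A = (\<Sum>i<dim_row A. A $$ (i, i))"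

definition frob_sq :: "complex mat \<Rightarrow> real" where
  "frob_sq A = Re (mtrace (mat_adjoint A * A))"

definition commutator :: "complex mat \<Rightarrow> complex mat \<Rightarrow> complex mat" where
  "commutator A B = A * B - B * A"

definition depol :: "nat \<Rightarrow> nat \<Rightarrow> complex mat \<Rightarrow> complex mat" where
  "depol n s A = (1 / 4 :: complex) \<cdot>\<^sub>m (A + sigma n s 0 * A * sigma n s 0
       + sigma n s 1 * A * sigma n s 1 + sigma n s 2 * A * sigma n s 2)"

definition depol_set :: "nat \<Rightarrow> nat set \<Rightarrow> complex mat \<Rightarrow> complex mat" where
  "depol_set n S A = foldr (depol n) (sorted_list_of_set S) A"

text \<open>Density matrix |m><m| = (I + m.sigma)/2 of the single-qubit pure state with Bloch vector m.\<close>
definition bloch_dm :: "(nat \<Rightarrow> real) \<Rightarrow> complex mat" where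
  "bloch_dm m = (1 / 2 :: complex) \<cdot>\<^sub>m (1\<^sub>m 2 + complex_of_real (m 0) \<cdot>\<^sub>m pauliX
       + complex_of_real (m 1) \<cdot>\<^sub>m pauliY + complex_of_real (m 2) \<cdot>\<^sub>m pauliZ)"

text \<open>Basis state labelled by l < 2^n (l_j = binary digit j-1 of l) built from
  Bloch vectors (-1)^{l_j} nperp j; its density matrix.\<close>
definition basis_dm :: "nat \<Rightarrow> (nat \<Rightarrow> nat \<Rightarrow> real) \<Rightarrow> nat \<Rightarrow> complex mat" where
  "basis_dm n nperp l = tensor n (\<lambda>j. bloch_dm (\<lambda>k. (-1) ^ qbit l j * nperp (j + 1) k))"

definition expval :: "complex mat \<Rightarrow> complex mat \<Rightarrow> complex" where
  "expval \<rho> A = mtrace (\<rho> * A)"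

end

theory Submission
  imports Defs "HOL-Analysis.L2_Norm"
begin

text \<open>
  Fix \<open>s \<in> S\<close> and put \<open>N = n\<^sub>s\<cdot>\<sigma>\<^sub>s\<close>. Every basis state \<open>\<rho>\<close> has a Bloch vector orthogonal to
  \<open>n\<^sub>s\<close> on qubit \<open>s\<close>, so the twirl acts on it as \<open>\<E>\<^sub>s(\<rho>) = (\<rho> + N\<rho>N)/2\<close>; as \<open>\<E>\<^sub>s\<close> is self-dual
  for the trace pairing, \<open>tr(\<rho>O) - tr(\<rho>\<E>\<^sub>s(O)) = tr(\<rho>N[N,O])/2\<close>. Since \<open>\<rho>\<close> is a projector,
  \<open>|tr(\<rho>X)| \<le> \<parallel>\<rho>X\<parallel>\<close>, and since the basis projectors sum to the identity, Cauchy-Schwarz over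
  the \<open>2^n\<close> basis states gives \<open>\<Sum>\<^sub>\<rho> \<parallel>\<rho>X\<parallel> \<le> 2^(n/2) \<parallel>X\<parallel>\<close>. Hence one depolarization changes the
  average expectation by at most \<open>\<parallel>[N,O]\<parallel> / 2^((n+2)/2) = sqrt(n\<^sub>s\<cdot>M\<^sub>s\<cdot>n\<^sub>s)\<close>.

  Applying the channels of \<open>S\<close> one after another, the triangle inequality adds up these
  contributions. The channels \<open>\<E>\<^sub>s\<^sub>'\<close> applied before \<open>\<E>\<^sub>s\<close> commute with \<open>[N,\<cdot>]\<close> and are
  Frobenius contractions, so each commutator may be evaluated on \<open>O\<close> itself.
\<close>

section \<open>Bit strings and tensor products\<close>

lemma qbit_less_2: "qbit i j < 2"
  by (simp add: qbit_def)

lemma qbit_eq_0_if_less: "(m::nat) < 2^n \<Longrightarrow> qbit m n = 0"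
  by (simp add: qbit_def)

lemma qbit_pow_add_low:
  assumes "(m::nat) < 2^n" "j < n"
  shows "qbit (2^n + m) j = qbit m j"
proof -
  have "(2::nat)^n = 2^j * 2^(n-j)" using assms(2) by (simp add: power_add[symmetric])
  then have "(2^n + m) div 2^j = 2^(n-j) + m div 2^j" by simp
  moreover obtain k where "(2::nat)^(n-j) = 2*k" using assms(2)
    by (metis dvd_def dvd_power zero_less_diff)
  ultimately show ?thesis unfolding qbit_def by simp
qed

lemma qbit_pow_add_top: "(m::nat) < 2^n \<Longrightarrow> qbit (2^n + m) n = 1"
  by (simp add: qbit_def)

lemma qbit_eq_imp_eq:
  assumes "i < 2^n" "k < 2^n" "\<forall>j<n. qbit i j = qbit k j"
  shows "i = k"
proof -
  have "bit i j = bit k j" for j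
  proof (cases "j < n")
    case True
    then show ?thesis using assms(3) by (simp add: qbit_def bit_iff_odd odd_iff_mod_2_eq_one)
  next
    case False
    then have "(2::nat)^n \<le> 2^j" by simp
    then have "i < 2^j" "k < 2^j" using assms(1,2) by linarith+
    then show ?thesis by (simp add: bit_iff_odd)
  qed
  then show ?thesis by (simp add: bit_eq_iff)
qed

lemma sum_lessThan_pow2_Suc:
  fixes g :: "nat \<Rightarrow> 'a::comm_monoid_add"
  shows "(\<Sum>m<2^Suc n. g m) = (\<Sum>m<2^n. g m) + (\<Sum>m<2^n. g (2^n + m))"
proof -
  have "{..<2^Suc n} = {..<(2::nat)^n} \<union> {2^n..<2^n + 2^n}" by auto
  then have "(\<Sum>m<2^Suc n. g m) = (\<Sum>m<2^n. g m) + (\<Sum>m\<in>{2^n..<2^n+2^n}. g m)"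
    by (simp add: sum.union_disjoint ivl_disj_int)
  also have "(\<Sum>m\<in>{2^n..<2^n+2^n}. g m) = (\<Sum>m<2^n. g (2^n + m))"
    using sum.shift_bounds_nat_ivl[of g 0 "2^n" "2^n"] by (simp add: lessThan_atLeast0 add.commute)
  finally show ?thesis .
qed

lemma sum_pow2_prod_qbit:
  fixes a :: "nat \<Rightarrow> nat \<Rightarrow> 'a::comm_semiring_1"
  shows "(\<Sum>m<2^n. \<Prod>j<n. a j (qbit m j)) = (\<Prod>j<n. a j 0 + a j 1)"
proof (induction n)
  case 0
  then show ?case by simp
next
  case (Suc n)
  have low: "(\<Prod>j<Suc n. a j (qbit m j)) = (\<Prod>j<n. a j (qbit m j)) * a n 0" if "m < 2^n" for m
    using that by (simp add: qbit_eq_0_if_less)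
  have high: "(\<Prod>j<Suc n. a j (qbit (2^n + m) j)) = (\<Prod>j<n. a j (qbit m j)) * a n 1"
    if "m < 2^n" for m
    using that by (simp add: qbit_pow_add_low qbit_pow_add_top)
  have "(\<Sum>m<2^Suc n. \<Prod>j<Suc n. a j (qbit m j))
      = (\<Sum>m<2^n. (\<Prod>j<n. a j (qbit m j)) * a n 0) + (\<Sum>m<2^n. (\<Prod>j<n. a j (qbit m j)) * a n 1)"
    unfolding sum_lessThan_pow2_Suc
    by (intro arg_cong2[where f="(+)"] sum.cong) (auto simp del: prod.lessThan_Suc simp: low high)
  also have "\<dots> = (\<Prod>j<Suc n. a j 0 + a j 1)"
    by (simp add: sum_distrib_right[symmetric] Suc distrib_left)
  finally show ?case .
qed

lemma tensor_carrier_mat [simp]: "tensor n f \<in> carrier_mat (2^n) (2^n)"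
  by (simp add: tensor_def)

lemma tensor_dim [simp]: "dim_row (tensor n f) = 2^n" "dim_col (tensor n f) = 2^n"
  by (simp_all add: tensor_def)

lemma tensor_index:
  "i < 2^n \<Longrightarrow> k < 2^n \<Longrightarrow> tensor n f $$ (i,k) = (\<Prod>j<n. f j $$ (qbit i j, qbit k j))"
  by (simp add: tensor_def)

lemma tensor_cong: "(\<And>j. j < n \<Longrightarrow> f j = g j) \<Longrightarrow> tensor n f = tensor n g"
  unfolding tensor_def by (intro cong_mat refl) (auto intro!: prod.cong)

lemma index_mult_mat_2:
  assumes "A \<in> carrier_mat 2 2" "B \<in> carrier_mat 2 2" "x < 2" "y < 2"
  shows "(A * B) $$ (x,y) = A $$ (x,0) * B $$ (0,y) + A $$ (x,1) * B $$ (1,y)"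
  using assms by (simp add: scalar_prod_def eval_nat_numeral)

lemma tensor_mult:
  assumes "\<And>j. j < n \<Longrightarrow> f j \<in> carrier_mat 2 2" "\<And>j. j < n \<Longrightarrow> g j \<in> carrier_mat 2 2"
  shows "tensor n f * tensor n g = tensor n (\<lambda>j. f j * g j)"
proof (rule eq_matI)
  fix i k assume "i < dim_row (tensor n (\<lambda>j. f j * g j))" "k < dim_col (tensor n (\<lambda>j. f j * g j))"
  then have i: "i < 2^n" and k: "k < 2^n" by auto
  have "(tensor n f * tensor n g) $$ (i,k) = (\<Sum>m<2^n. tensor n f $$ (i,m) * tensor n g $$ (m,k))"
    using i k by (simp add: scalar_prod_def lessThan_atLeast0)
  also have "\<dots> = (\<Sum>m<2^n. \<Prod>j<n. (\<lambda>j b. f j $$ (qbit i j, b) * g j $$ (b, qbit k j)) j (qbit m j))"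
    using i k by (intro sum.cong) (auto simp: tensor_index prod.distrib)
  also have "\<dots> = (\<Prod>j<n. f j $$ (qbit i j, 0) * g j $$ (0, qbit k j) + f j $$ (qbit i j, 1) * g j $$ (1, qbit k j))"
    by (rule sum_pow2_prod_qbit)
  also have "\<dots> = tensor n (\<lambda>j. f j * g j) $$ (i,k)"
    using i k assms by (auto simp: tensor_index index_mult_mat_2 qbit_less_2 intro!: prod.cong)
  finally show "(tensor n f * tensor n g) $$ (i,k) = tensor n (\<lambda>j. f j * g j) $$ (i,k)" .
qed auto

lemma tensor_one: "tensor n (\<lambda>j. 1\<^sub>m 2) = 1\<^sub>m (2^n)"
proof (rule eq_matI)
  fix i k assume "i < dim_row (1\<^sub>m (2^n) :: complex mat)" "k < dim_col (1\<^sub>m (2^n) :: complex mat)"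
  then have i: "i < 2^n" and k: "k < 2^n" by auto
  show "tensor n (\<lambda>j. 1\<^sub>m 2) $$ (i, k) = (1\<^sub>m (2^n) :: complex mat) $$ (i, k)"
  proof (cases "i = k")
    case True
    then show ?thesis using i k by (simp add: tensor_index qbit_less_2)
  next
    case False
    then obtain j where "j < n" "qbit i j \<noteq> qbit k j" using qbit_eq_imp_eq[OF i k] by blast
    then have "(\<Prod>j<n. (1\<^sub>m 2 :: complex mat) $$ (qbit i j, qbit k j)) = 0"
      by (intro prod_zero bexI[of _ j]) (auto simp: qbit_less_2)
    then show ?thesis using i k False by (simp add: tensor_index)
  qed
qed auto

lemma mtrace_tensor:
  "mtrace (tensor n F) = (\<Prod>j<n. F j $$ (0,0) + F j $$ (1,1))"
proof -
  have "mtrace (tensor n F) = (\<Sum>i<2^n. \<Prod>j<n. (\<lambda>j b. F j $$ (b,b)) j (qbit i j))"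
    by (simp add: mtrace_def tensor_index)
  also have "\<dots> = (\<Prod>j<n. F j $$ (0,0) + F j $$ (1,1))"
    by (rule sum_pow2_prod_qbit)
  finally show ?thesis .
qed

lemma mat_adjoint_dim [simp]:
  "dim_row (mat_adjoint A) = dim_col A" "dim_col (mat_adjoint A) = dim_row A"
  by (simp_all add: mat_adjoint_def)

lemma mat_adjoint_index [simp]:
  "i < dim_col A \<Longrightarrow> k < dim_row A \<Longrightarrow> mat_adjoint A $$ (i,k) = cnj (A $$ (k,i))"
  by (simp add: mat_adjoint_def mat_of_rows_index)

lemma mat_adjoint_carrier_mat: "A \<in> carrier_mat r c \<Longrightarrow> mat_adjoint A \<in> carrier_mat c r"
  by (rule carrier_matI) (auto dest: carrier_matD)

lemma mat_adjoint_mult: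
  fixes A B :: "complex mat"
  assumes "A \<in> carrier_mat r m" "B \<in> carrier_mat m c"
  shows "mat_adjoint (A * B) = mat_adjoint B * mat_adjoint A"
proof (rule eq_matI)
  fix i k assume "i < dim_row (mat_adjoint B * mat_adjoint A)" "k < dim_col (mat_adjoint B * mat_adjoint A)"
  then have ik: "i < c" "k < r" using assms by auto
  have "mat_adjoint (A * B) $$ (i, k) = cnj ((A*B) $$ (k,i))"
    using ik assms by (intro mat_adjoint_index) auto
  also have "\<dots> = (\<Sum>x<m. mat_adjoint B $$ (i,x) * mat_adjoint A $$ (x,k))"
    using ik assms by (simp add: scalar_prod_def mult.commute lessThan_atLeast0)
  also have "\<dots> = (mat_adjoint B * mat_adjoint A) $$ (i, k)"
    using ik assms by (simp add: scalar_prod_def lessThan_atLeast0)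
  finally show "mat_adjoint (A * B) $$ (i, k) = (mat_adjoint B * mat_adjoint A) $$ (i, k)" .
qed (use assms in simp_all)

lemma mat_adjoint_tensor:
  assumes "\<And>j. j < n \<Longrightarrow> f j \<in> carrier_mat 2 2"
  shows "mat_adjoint (tensor n f) = tensor n (\<lambda>j. mat_adjoint (f j))"
proof (rule eq_matI)
  fix i k assume "i < dim_row (tensor n (\<lambda>j. mat_adjoint (f j)))" "k < dim_col (tensor n (\<lambda>j. mat_adjoint (f j)))"
  then have i: "i < 2^n" and k: "k < 2^n" by auto
  have "mat_adjoint (tensor n f) $$ (i, k) = (\<Prod>j<n. cnj (f j $$ (qbit k j, qbit i j)))"
    using i k by (simp add: tensor_index)
  also have "\<dots> = (\<Prod>j<n. mat_adjoint (f j) $$ (qbit i j, qbit k j))"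
  proof (rule prod.cong)
    fix j assume "j \<in> {..<n}"
    then have "f j \<in> carrier_mat 2 2" using assms by simp
    then show "cnj (f j $$ (qbit k j, qbit i j)) = mat_adjoint (f j) $$ (qbit i j, qbit k j)"
      by (simp add: qbit_less_2)
  qed simp
  finally show "mat_adjoint (tensor n f) $$ (i, k) = tensor n (\<lambda>j. mat_adjoint (f j)) $$ (i, k)"
    using i k by (simp add: tensor_index)
qed simp_all

lemma tensor_upd_index:
  assumes "p < n" "i < 2^n" "k < 2^n"
  shows "tensor n (f(p := X)) $$ (i,k)
    = X $$ (qbit i p, qbit k p) * (\<Prod>j\<in>{..<n}-{p}. f j $$ (qbit i j, qbit k j))"
proof -
  have "tensor n (f(p := X)) $$ (i,k)
      = X $$ (qbit i p, qbit k p) * (\<Prod>j\<in>{..<n}-{p}. (f(p := X)) j $$ (qbit i j, qbit k j))"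
    using assms prod.remove[of "{..<n}" p "\<lambda>j. (f(p := X)) j $$ (qbit i j, qbit k j)"]
    by (simp add: tensor_index)
  also have "(\<Prod>j\<in>{..<n}-{p}. (f(p := X)) j $$ (qbit i j, qbit k j))
      = (\<Prod>j\<in>{..<n}-{p}. f j $$ (qbit i j, qbit k j))"
    by (intro prod.cong) auto
  finally show ?thesis .
qed

lemma tensor_upd_add:
  assumes "p < n" "A \<in> carrier_mat 2 2" "B \<in> carrier_mat 2 2"
  shows "tensor n (f(p := A + B)) = tensor n (f(p := A)) + tensor n (f(p := B))"
  by (rule eq_matI) (use assms in \<open>auto simp: tensor_upd_index qbit_less_2 distrib_right\<close>)

lemma tensor_upd_smult:
  assumes "p < n" "A \<in> carrier_mat 2 2"
  shows "tensor n (f(p := c \<cdot>\<^sub>m A)) = c \<cdot>\<^sub>m tensor n (f(p := A))"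
  by (rule eq_matI) (use assms in \<open>auto simp: tensor_upd_index qbit_less_2\<close>)

section \<open>Single-qubit operators\<close>

lemma mat_eq_2I:
  assumes "A \<in> carrier_mat 2 2" "B \<in> carrier_mat 2 2"
    "A $$ (0,0) = B $$ (0,0)" "A $$ (0,Suc 0) = B $$ (0,Suc 0)"
    "A $$ (Suc 0,0) = B $$ (Suc 0,0)" "A $$ (Suc 0,Suc 0) = B $$ (Suc 0,Suc 0)"
  shows "A = B"
proof (rule eq_matI)
  fix i j assume "i < dim_row B" "j < dim_col B"
  then have "i = 0 \<or> i = 1" "j = 0 \<or> j = 1" using assms(2) by auto
  then show "A $$ (i, j) = B $$ (i, j)" using assms(3-6) by auto
qed (use assms in auto)

lemma index_mult_mat_2_explicit:
  assumes "A \<in> carrier_mat 2 2" "B \<in> carrier_mat 2 2"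
  shows "(A * B) $$ (0,0) = A $$ (0,0) * B $$ (0,0) + A $$ (0,Suc 0) * B $$ (Suc 0,0)"
    "(A * B) $$ (0,Suc 0) = A $$ (0,0) * B $$ (0,Suc 0) + A $$ (0,Suc 0) * B $$ (Suc 0,Suc 0)"
    "(A * B) $$ (Suc 0,0) = A $$ (Suc 0,0) * B $$ (0,0) + A $$ (Suc 0,Suc 0) * B $$ (Suc 0,0)"
    "(A * B) $$ (Suc 0,Suc 0) = A $$ (Suc 0,0) * B $$ (0,Suc 0) + A $$ (Suc 0,Suc 0) * B $$ (Suc 0,Suc 0)"
  using index_mult_mat_2[OF assms] by auto

lemma mult_carrier_mat_2 [simp]:
  "A \<in> carrier_mat 2 2 \<Longrightarrow> B \<in> carrier_mat 2 2 \<Longrightarrow> A * B \<in> carrier_mat 2 2"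
  by (rule mult_carrier_mat)

lemma pauli_carrier_mat [simp]:
  "pauliX \<in> carrier_mat 2 2" "pauliY \<in> carrier_mat 2 2" "pauliZ \<in> carrier_mat 2 2"
  "pauli k \<in> carrier_mat 2 2"
  by (simp_all add: pauli_def pauliX_def pauliY_def pauliZ_def mat_of_rows_list_def numeral_2_eq_2)

lemma pauli_dim [simp]:
  "dim_row pauliX = 2" "dim_col pauliX = 2" "dim_row pauliY = 2" "dim_col pauliY = 2"
  "dim_row pauliZ = 2" "dim_col pauliZ = 2"
  by (simp_all add: pauliX_def pauliY_def pauliZ_def mat_of_rows_list_def)

lemma pauli_index:
  "pauliX $$ (0,0) = 0" "pauliX $$ (0,Suc 0) = 1" "pauliX $$ (Suc 0,0) = 1" "pauliX $$ (Suc 0,Suc 0) = 0"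
  "pauliY $$ (0,0) = 0" "pauliY $$ (0,Suc 0) = -\<i>" "pauliY $$ (Suc 0,0) = \<i>" "pauliY $$ (Suc 0,Suc 0) = 0"
  "pauliZ $$ (0,0) = 1" "pauliZ $$ (0,Suc 0) = 0" "pauliZ $$ (Suc 0,0) = 0" "pauliZ $$ (Suc 0,Suc 0) = -1"
  by (simp_all add: pauliX_def pauliY_def pauliZ_def mat_of_rows_list_def)

lemma pauli_square: "pauli k * pauli k = 1\<^sub>m 2"
  by (rule mat_eq_2I)
    (auto simp: pauli_def index_mult_mat_2_explicit pauli_index simp del: index_mult_mat(1))

lemma pauli_adjoint: "mat_adjoint (pauli k) = pauli k"
  by (rule mat_eq_2I) (auto simp: pauli_def pauli_index mat_adjoint_carrier_mat)

definition pauli_dot :: "(nat \<Rightarrow> real) \<Rightarrow> complex mat" where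
  "pauli_dot v = complex_of_real (v 0) \<cdot>\<^sub>m pauliX + complex_of_real (v 1) \<cdot>\<^sub>m pauliY
     + complex_of_real (v 2) \<cdot>\<^sub>m pauliZ"

lemma pauli_dot_carrier_mat [simp]: "pauli_dot v \<in> carrier_mat 2 2"
  by (simp add: pauli_dot_def)

lemma bloch_dm_carrier_mat [simp]: "bloch_dm m \<in> carrier_mat 2 2"
  by (simp add: bloch_dm_def)

lemma pauli_dot_dim [simp]: "dim_row (pauli_dot v) = 2" "dim_col (pauli_dot v) = 2"
  by (simp_all add: pauli_dot_def)

lemma bloch_dm_dim [simp]: "dim_row (bloch_dm m) = 2" "dim_col (bloch_dm m) = 2"
  by (simp_all add: bloch_dm_def)

lemma pauli_dot_index:
  "pauli_dot v $$ (0,0) = v 2" "pauli_dot v $$ (0,Suc 0) = v 0 - \<i> * v 1"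
  "pauli_dot v $$ (Suc 0,0) = v 0 + \<i> * v 1" "pauli_dot v $$ (Suc 0,Suc 0) = - v 2"
  by (simp_all add: pauli_dot_def pauli_index)

lemma bloch_dm_index:
  "bloch_dm m $$ (0,0) = (1 + m 2) / 2" "bloch_dm m $$ (0,Suc 0) = (m 0 - \<i> * m 1) / 2"
  "bloch_dm m $$ (Suc 0,0) = (m 0 + \<i> * m 1) / 2" "bloch_dm m $$ (Suc 0,Suc 0) = (1 - m 2) / 2"
  by (simp_all add: bloch_dm_def pauli_index)

lemma pauli_dot_adjoint: "mat_adjoint (pauli_dot v) = pauli_dot v"
  by (rule mat_eq_2I) (auto simp: pauli_dot_index mat_adjoint_carrier_mat)

lemma bloch_dm_adjoint: "mat_adjoint (bloch_dm m) = bloch_dm m"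
  by (rule mat_eq_2I) (auto simp: bloch_dm_index mat_adjoint_carrier_mat)

lemma pauli_dot_square:
  assumes "(v 0)\<^sup>2 + (v 1)\<^sup>2 + (v 2)\<^sup>2 = 1"
  shows "pauli_dot v * pauli_dot v = 1\<^sub>m 2"
proof -
  have "v 2 * v 2 + v 0 * v 0 + v 1 * v 1 = 1" using assms by (simp add: power2_eq_square)
  then show ?thesis
    by (intro mat_eq_2I)
      (auto simp: pauli_dot_index index_mult_mat_2_explicit complex_eq_iff algebra_simps
        simp del: index_mult_mat(1))
qed

lemma bloch_dm_idem:
  assumes "(m 0)\<^sup>2 + (m 1)\<^sup>2 + (m 2)\<^sup>2 = 1"
  shows "bloch_dm m * bloch_dm m = bloch_dm m"
proof -
  have "m 2 * m 2 + m 0 * m 0 + m 1 * m 1 = 1" using assms by (simp add: power2_eq_square)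
  then show ?thesis
    by (intro mat_eq_2I)
      (auto simp: bloch_dm_index index_mult_mat_2_explicit complex_eq_iff field_simps
        simp del: index_mult_mat(1))
qed

lemma twirl_bloch_dm:
  "(1/4::complex) \<cdot>\<^sub>m (bloch_dm m + pauli 0 * bloch_dm m * pauli 0 + pauli 1 * bloch_dm m * pauli 1
     + pauli 2 * bloch_dm m * pauli 2) = (1/2::complex) \<cdot>\<^sub>m 1\<^sub>m 2"
  by (rule mat_eq_2I)
    (auto simp: bloch_dm_index index_mult_mat_2_explicit pauli_index pauli_def complex_eq_iff
      algebra_simps simp del: index_mult_mat(1))

lemma index_pauli_dot_conj_bloch_dm:
  fixes v m :: "nat \<Rightarrow> real" and sq dt :: complex
  defines "sq \<equiv> complex_of_real (v 0 * v 0 + v 1 * v 1 + v 2 * v 2)"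
    and "dt \<equiv> complex_of_real (v 0 * m 0 + v 1 * m 1 + v 2 * m 2)"
  shows "(pauli_dot v * bloch_dm m * pauli_dot v) $$ (0,0) = (sq + 2 * dt * v 2 - sq * m 2) / 2"
    "(pauli_dot v * bloch_dm m * pauli_dot v) $$ (0,Suc 0) = (2 * dt * (v 0 - \<i> * v 1) - sq * (m 0 - \<i> * m 1)) / 2"
    "(pauli_dot v * bloch_dm m * pauli_dot v) $$ (Suc 0,0) = (2 * dt * (v 0 + \<i> * v 1) - sq * (m 0 + \<i> * m 1)) / 2"
    "(pauli_dot v * bloch_dm m * pauli_dot v) $$ (Suc 0,Suc 0) = (sq - 2 * dt * v 2 + sq * m 2) / 2"
  unfolding sq_def dt_def
  by (simp_all add: bloch_dm_index pauli_dot_index index_mult_mat_2_explicit complex_eq_iff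
      del: index_mult_mat(1)) (simp_all add: field_simps)

text \<open>Reflecting \<open>|m\<rangle>\<langle>m|\<close> through an axis \<open>v \<perp> m\<close> gives \<open>|-m\<rangle>\<langle>-m|\<close>.\<close>

lemma average_reflect_bloch_dm:
  assumes "(v 0)\<^sup>2 + (v 1)\<^sup>2 + (v 2)\<^sup>2 = 1" "m 0 * v 0 + m 1 * v 1 + m 2 * v 2 = 0"
  shows "(1/2::complex) \<cdot>\<^sub>m (bloch_dm m + pauli_dot v * bloch_dm m * pauli_dot v)
    = (1/2::complex) \<cdot>\<^sub>m 1\<^sub>m 2"
proof -
  have unit: "v 0 * v 0 + v 1 * v 1 + v 2 * v 2 = 1" using assms(1) by (simp add: power2_eq_square)
  have orth: "v 0 * m 0 + v 1 * m 1 + v 2 * m 2 = 0" using assms(2) by (simp add: mult.commute)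
  show ?thesis
    by (intro mat_eq_2I)
      (simp_all add: index_pauli_dot_conj_bloch_dm[of v m, unfolded unit orth] bloch_dm_index
        del: index_mult_mat(1), simp_all add: field_simps)
qed

section \<open>Single-site operators on \<open>n\<close> qubits\<close>

definition site_factors :: "nat \<Rightarrow> complex mat \<Rightarrow> nat \<Rightarrow> complex mat" where
  "site_factors p A = (\<lambda>_. 1\<^sub>m 2)(p := A)"

lemma site_factors_carrier_mat [simp]:
  "A \<in> carrier_mat 2 2 \<Longrightarrow> site_factors p A j \<in> carrier_mat 2 2"
  by (simp add: site_factors_def)

lemma embed_eq_tensor_site_factors: "embed n s A = tensor n (site_factors (s - 1) A)"
  unfolding embed_def site_factors_def by (rule arg_cong[where f="tensor n"]) auto

lemma tensor_site_factors_one: "tensor n (site_factors p (1\<^sub>m 2)) = 1\<^sub>m (2^n)"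
proof -
  have "site_factors p (1\<^sub>m 2) = (\<lambda>_. 1\<^sub>m 2)" by (auto simp: site_factors_def)
  then show ?thesis by (simp add: tensor_one)
qed

lemma tensor_site_factors_mult:
  assumes "A \<in> carrier_mat 2 2" "B \<in> carrier_mat 2 2"
  shows "tensor n (site_factors p A) * tensor n (site_factors p B) = tensor n (site_factors p (A * B))"
proof -
  have "tensor n (site_factors p A) * tensor n (site_factors p B)
      = tensor n (\<lambda>j. site_factors p A j * site_factors p B j)"
    using assms by (intro tensor_mult) auto
  also have "\<dots> = tensor n (site_factors p (A * B))"
    by (intro tensor_cong) (auto simp: site_factors_def)
  finally show ?thesis .
qed

lemma tensor_site_factors_commute:
  assumes "A \<in> carrier_mat 2 2" "B \<in> carrier_mat 2 2" "p \<noteq> q"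
  shows "tensor n (site_factors p A) * tensor n (site_factors q B)
    = tensor n (site_factors q B) * tensor n (site_factors p A)"
proof -
  have "tensor n (site_factors p A) * tensor n (site_factors q B)
      = tensor n (\<lambda>j. site_factors p A j * site_factors q B j)"
    using assms by (intro tensor_mult) auto
  also have "\<dots> = tensor n (\<lambda>j. site_factors q B j * site_factors p A j)"
    using assms by (intro tensor_cong) (auto simp: site_factors_def)
  also have "\<dots> = tensor n (site_factors q B) * tensor n (site_factors p A)"
    using assms by (intro tensor_mult[symmetric]) auto
  finally show ?thesis .
qed

lemma mat_adjoint_tensor_site_factors:
  assumes "A \<in> carrier_mat 2 2"
  shows "mat_adjoint (tensor n (site_factors p A)) = tensor n (site_factors p (mat_adjoint A))"
proof -
  have "mat_adjoint (tensor n (site_factors p A)) = tensor n (\<lambda>j. mat_adjoint (site_factors p A j))"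
    using assms by (intro mat_adjoint_tensor) auto
  also have "\<dots> = tensor n (site_factors p (mat_adjoint A))"
  proof (intro tensor_cong)
    fix j
    have "mat_adjoint (1\<^sub>m 2 :: complex mat) = 1\<^sub>m 2"
      by (rule eq_matI) auto
    then show "mat_adjoint (site_factors p A j) = site_factors p (mat_adjoint A) j"
      by (auto simp: site_factors_def)
  qed
  finally show ?thesis .
qed

lemma tensor_site_factors_conj:
  assumes "p < n" "A \<in> carrier_mat 2 2" "B \<in> carrier_mat 2 2"
    and F: "\<And>j. j < n \<Longrightarrow> F j \<in> carrier_mat 2 2"
  shows "tensor n (site_factors p A) * tensor n F * tensor n (site_factors p B)
    = tensor n (F(p := A * F p * B))"
proof -
  have "tensor n (site_factors p A) * tensor n F * tensor n (site_factors p B)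
     = tensor n (\<lambda>j. site_factors p A j * F j * site_factors p B j)"
    using assms by (simp add: tensor_mult)
  also have "\<dots> = tensor n (F(p := A * F p * B))"
  proof (intro tensor_cong)
    fix j assume "j < n"
    then have "F j \<in> carrier_mat 2 2" by (rule F)
    then show "site_factors p A j * F j * site_factors p B j = (F(p := A * F p * B)) j"
      by (auto simp: site_factors_def)
  qed
  finally show ?thesis .
qed

lemma sigma_eq_tensor: "sigma n s k = tensor n (site_factors (s - 1) (pauli k))"
  by (simp add: sigma_def embed_eq_tensor_site_factors)

lemma ndot_sigma_eq_tensor:
  assumes "s \<in> {1..n}"
  shows "ndot_sigma n s v = tensor n (site_factors (s - 1) (pauli_dot v))"
proof -
  have "s - 1 < n" using assms by auto
  then show ?thesis
    unfolding ndot_sigma_def pauli_dot_def sigma_eq_tensor pauli_def site_factors_def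
    by (simp add: tensor_upd_add tensor_upd_smult)
qed

lemma sigma_carrier_mat [simp]: "sigma n s k \<in> carrier_mat (2^n) (2^n)"
  by (simp add: sigma_eq_tensor)

lemma ndot_sigma_carrier_mat [simp]: "ndot_sigma n s v \<in> carrier_mat (2^n) (2^n)"
  by (simp add: ndot_sigma_def)

lemma sigma_square: "sigma n s k * sigma n s k = 1\<^sub>m (2^n)"
  by (simp add: sigma_eq_tensor tensor_site_factors_mult pauli_square tensor_site_factors_one)

lemma sigma_adjoint: "mat_adjoint (sigma n s k) = sigma n s k"
  by (simp add: sigma_eq_tensor mat_adjoint_tensor_site_factors pauli_adjoint)

lemma ndot_sigma_square:
  assumes "s \<in> {1..n}" "(\<Sum>k<3. (v k)\<^sup>2) = 1"
  shows "ndot_sigma n s v * ndot_sigma n s v = 1\<^sub>m (2^n)"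
proof -
  have "(v 0)\<^sup>2 + (v 1)\<^sup>2 + (v 2)\<^sup>2 = 1" using assms(2) by (simp add: numeral_3_eq_3 numeral_2_eq_2)
  then show ?thesis
    using assms(1)
    by (simp add: ndot_sigma_eq_tensor tensor_site_factors_mult pauli_dot_square tensor_site_factors_one)
qed

lemma ndot_sigma_adjoint: "s \<in> {1..n} \<Longrightarrow> mat_adjoint (ndot_sigma n s v) = ndot_sigma n s v"
  by (simp add: ndot_sigma_eq_tensor mat_adjoint_tensor_site_factors pauli_dot_adjoint)

lemma ndot_sigma_commute_sigma:
  assumes "s \<in> {1..n}" "s' \<in> {1..n}" "s \<noteq> s'"
  shows "ndot_sigma n s v * sigma n s' k = sigma n s' k * ndot_sigma n s v"
proof -
  have "s - 1 \<noteq> s' - 1" using assms by auto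
  then show ?thesis using assms(1) by (simp add: ndot_sigma_eq_tensor sigma_eq_tensor tensor_site_factors_commute)
qed

section \<open>Traces and the Frobenius norm\<close>

lemma mult_carrier_mat_square:
  "A \<in> carrier_mat d d \<Longrightarrow> B \<in> carrier_mat d d \<Longrightarrow> A * B \<in> carrier_mat d d"
  by (rule mult_carrier_mat)

lemma assoc_mult_mat_square:
  "A \<in> carrier_mat d d \<Longrightarrow> B \<in> carrier_mat d d \<Longrightarrow> C \<in> carrier_mat d d \<Longrightarrow> A * B * C = A * (B * C)"
  by (rule assoc_mult_mat)

lemma mtrace_mult:
  assumes "A \<in> carrier_mat r c" "B \<in> carrier_mat c r"
  shows "mtrace (A * B) = (\<Sum>i<r. \<Sum>k<c. A $$ (i,k) * B $$ (k,i))"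
  using assms by (simp add: mtrace_def scalar_prod_def lessThan_atLeast0)

lemma mtrace_mult_commute:
  assumes "A \<in> carrier_mat r c" "B \<in> carrier_mat c r"
  shows "mtrace (A * B) = mtrace (B * A)"
  by (simp add: mtrace_mult[OF assms] mtrace_mult[OF assms(2,1)] sum.swap[of _ "{..<r}"] mult.commute)

lemma mtrace_add: "A \<in> carrier_mat d d \<Longrightarrow> B \<in> carrier_mat d d \<Longrightarrow> mtrace (A + B) = mtrace A + mtrace B"
  by (simp add: mtrace_def sum.distrib)

lemma mtrace_diff: "A \<in> carrier_mat d d \<Longrightarrow> B \<in> carrier_mat d d \<Longrightarrow> mtrace (A - B) = mtrace A - mtrace B"
  by (simp add: mtrace_def sum_subtractf)

lemma mtrace_smult: "A \<in> carrier_mat d d \<Longrightarrow> mtrace (c \<cdot>\<^sub>m A) = c * mtrace A"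
  by (simp add: mtrace_def sum_distrib_left)

lemma mtrace_mult_add_right:
  assumes "A \<in> carrier_mat d d" "B \<in> carrier_mat d d" "C \<in> carrier_mat d d"
  shows "mtrace (A * (B + C)) = mtrace (A * B) + mtrace (A * C)"
  using assms by (simp add: mult_add_distrib_mat[of A d d B d C] mtrace_add[of _ d])

lemma mtrace_mult_add_left:
  assumes "A \<in> carrier_mat d d" "B \<in> carrier_mat d d" "C \<in> carrier_mat d d"
  shows "mtrace ((A + B) * C) = mtrace (A * C) + mtrace (B * C)"
  using assms by (simp add: add_mult_distrib_mat[of A d d B C d] mtrace_add[of _ d])

lemma mtrace_mult_diff_right:
  assumes "A \<in> carrier_mat d d" "B \<in> carrier_mat d d" "C \<in> carrier_mat d d"
  shows "mtrace (A * (B - C)) = mtrace (A * B) - mtrace (A * C)"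
  using assms by (simp add: mult_minus_distrib_mat[of A d d B d C] mtrace_diff[of _ d])

lemma mtrace_mult_smult_right:
  "A \<in> carrier_mat d d \<Longrightarrow> B \<in> carrier_mat d d \<Longrightarrow> mtrace (A * (c \<cdot>\<^sub>m B)) = c * mtrace (A * B)"
  by (simp add: mult_smult_distrib[of A d d B d] mtrace_smult[of _ d])

lemma mtrace_mult_smult_left:
  "A \<in> carrier_mat d d \<Longrightarrow> B \<in> carrier_mat d d \<Longrightarrow> mtrace ((c \<cdot>\<^sub>m A) * B) = c * mtrace (A * B)"
  by (simp add: mult_smult_assoc_mat[of A d d B d] mtrace_smult[of _ d])

lemma mtrace_mult_conj:
  assumes "A \<in> carrier_mat d d" "Y \<in> carrier_mat d d" "S \<in> carrier_mat d d"
  shows "mtrace (A * (S * Y * S)) = mtrace ((S * A * S) * Y)"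
proof -
  have "A * (S * Y * S) = (A * S * Y) * S"
    using assms by (simp add: mult_carrier_mat_square assoc_mult_mat_square)
  then have "mtrace (A * (S * Y * S)) = mtrace (S * (A * S * Y))"
    using assms by (simp only:) (rule mtrace_mult_commute[of _ d d], auto)
  also have "S * (A * S * Y) = (S * A * S) * Y"
    using assms by (simp add: mult_carrier_mat_square assoc_mult_mat_square)
  finally show ?thesis .
qed

definition frob_norm :: "complex mat \<Rightarrow> real" where
  "frob_norm A = sqrt (frob_sq A)"

lemma frob_sq_eq_sum:
  assumes "A \<in> carrier_mat r c"
  shows "frob_sq A = (\<Sum>i<r. \<Sum>k<c. (cmod (A $$ (i,k)))\<^sup>2)"
proof -
  have "mtrace (mat_adjoint A * A) = (\<Sum>k<c. \<Sum>i<r. cnj (A $$ (i,k)) * A $$ (i,k))"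
    using assms mat_adjoint_carrier_mat[OF assms] by (simp add: mtrace_mult[of _ c r])
  also have "\<dots> = (\<Sum>k<c. \<Sum>i<r. complex_of_real ((cmod (A $$ (i,k)))\<^sup>2))"
    by (simp add: complex_norm_square[symmetric] mult.commute del: of_real_power)
  finally have "mtrace (mat_adjoint A * A) = complex_of_real (\<Sum>i<r. \<Sum>k<c. (cmod (A $$ (i,k)))\<^sup>2)"
    by (simp add: sum.swap[of _ "{..<c}"])
  then show ?thesis unfolding frob_sq_def by simp
qed

lemma frob_sq_nonneg: "A \<in> carrier_mat r c \<Longrightarrow> 0 \<le> frob_sq A"
  by (simp add: frob_sq_eq_sum sum_nonneg)

lemma frob_norm_eq_L2_set:
  assumes "A \<in> carrier_mat r c"
  shows "frob_norm A = L2_set (\<lambda>x. cmod (A $$ x)) ({..<r} \<times> {..<c})"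
  unfolding frob_norm_def L2_set_def frob_sq_eq_sum[OF assms] sum.cartesian_product
  by (simp add: case_prod_beta)

lemma frob_norm_triangle:
  assumes "A \<in> carrier_mat r c" "B \<in> carrier_mat r c"
  shows "frob_norm (A + B) \<le> frob_norm A + frob_norm B"
proof -
  have "frob_norm (A + B) = L2_set (\<lambda>x. cmod ((A + B) $$ x)) ({..<r} \<times> {..<c})"
    using assms by (simp add: frob_norm_eq_L2_set)
  also have "\<dots> \<le> L2_set (\<lambda>x. cmod (A $$ x) + cmod (B $$ x)) ({..<r} \<times> {..<c})"
    using assms by (intro L2_set_mono) (auto simp: norm_triangle_ineq)
  also have "\<dots> \<le> frob_norm A + frob_norm B"
    using assms by (simp add: frob_norm_eq_L2_set L2_set_triangle_ineq)
  finally show ?thesis .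
qed

lemma frob_norm_smult:
  assumes "A \<in> carrier_mat r c"
  shows "frob_norm (a \<cdot>\<^sub>m A) = cmod a * frob_norm A"
proof -
  have "frob_norm (a \<cdot>\<^sub>m A) = L2_set (\<lambda>x. cmod a * cmod (A $$ x)) ({..<r} \<times> {..<c})"
    using assms by (subst frob_norm_eq_L2_set[of _ r c]) (auto simp: norm_mult intro!: L2_set_cong)
  also have "\<dots> = cmod a * frob_norm A"
    using assms by (simp add: frob_norm_eq_L2_set L2_set_right_distrib)
  finally show ?thesis .
qed

lemma norm_mtrace_mult_le:
  assumes "A \<in> carrier_mat r c" "B \<in> carrier_mat c r"
  shows "cmod (mtrace (A * B)) \<le> frob_norm A * frob_norm B"
proof -
  let ?I = "{..<r} \<times> {..<c}"
  have "cmod (mtrace (A * B)) = cmod (\<Sum>(i,k)\<in>?I. A $$ (i,k) * B $$ (k,i))"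
    using assms by (simp add: mtrace_mult sum.cartesian_product)
  also have "\<dots> \<le> (\<Sum>x\<in>?I. \<bar>cmod (A $$ x)\<bar> * \<bar>cmod (B $$ (snd x, fst x))\<bar>)"
    by (rule order_trans[OF norm_sum]) (simp add: case_prod_beta norm_mult)
  also have "\<dots> \<le> L2_set (\<lambda>x. cmod (A $$ x)) ?I * L2_set (\<lambda>x. cmod (B $$ (snd x, fst x))) ?I"
    by (rule L2_set_mult_ineq)
  also have "L2_set (\<lambda>x. cmod (B $$ (snd x, fst x))) ?I = frob_norm B"
  proof -
    have "frob_sq B = (\<Sum>i<r. \<Sum>k<c. (cmod (B $$ (k,i)))\<^sup>2)"
      using frob_sq_eq_sum[OF assms(2)] by (simp add: sum.swap[of _ "{..<c}"])
    then show ?thesis unfolding frob_norm_def L2_set_def sum.cartesian_product by (simp add: case_prod_beta)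
  qed
  finally show ?thesis using assms by (simp add: frob_norm_eq_L2_set)
qed

lemma frob_norm_conj_involution:
  assumes Z: "Z \<in> carrier_mat d d" and S: "S \<in> carrier_mat d d"
    and S_adj: "mat_adjoint S = S" and S_sq: "S * S = 1\<^sub>m d"
  shows "frob_norm (S * Z * S) = frob_norm Z"
proof -
  have Za: "mat_adjoint Z \<in> carrier_mat d d" using Z by (rule mat_adjoint_carrier_mat)
  have SS: "S * (S * X) = X" if "X \<in> carrier_mat d d" for X
    using assoc_mult_mat[OF S S that] S_sq that by simp
  have "mat_adjoint (S * Z * S) = S * (mat_adjoint Z * S)"
    by (simp only: mat_adjoint_mult[OF mult_carrier_mat[OF S Z] S] mat_adjoint_mult[OF S Z] S_adj)
  then have "mat_adjoint (S * Z * S) * (S * Z * S) = S * (mat_adjoint Z * (S * (S * (Z * S))))"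
    using S Z Za by (simp add: assoc_mult_mat[of _ d d _ d _ d])
  also have "\<dots> = (S * (mat_adjoint Z * Z)) * S"
    using S Z Za by (simp add: SS assoc_mult_mat[of _ d d _ d _ d])
  finally have "mtrace (mat_adjoint (S * Z * S) * (S * Z * S)) = mtrace ((S * (mat_adjoint Z * Z)) * S)"
    by simp
  also have "\<dots> = mtrace (S * (S * (mat_adjoint Z * Z)))"
    using S Z Za by (intro mtrace_mult_commute[of _ d d]) auto
  also have "\<dots> = mtrace (mat_adjoint Z * Z)"
    using Z Za by (simp add: SS)
  finally show ?thesis by (simp add: frob_norm_def frob_sq_def)
qed

lemma sum_sqrt_le_sqrt_card_mult:
  assumes "finite A" "\<And>l. l \<in> A \<Longrightarrow> 0 \<le> x l"
  shows "(\<Sum>l\<in>A. sqrt (x l)) \<le> sqrt (card A) * sqrt (\<Sum>l\<in>A. x l)"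
proof -
  have "(\<Sum>l\<in>A. sqrt (x l)) = (\<Sum>l\<in>A. \<bar>1\<bar> * \<bar>sqrt (x l)\<bar>)" using assms by (intro sum.cong) auto
  also have "\<dots> \<le> L2_set (\<lambda>_. 1) A * L2_set (\<lambda>l. sqrt (x l)) A" by (rule L2_set_mult_ineq)
  also have "\<dots> = sqrt (card A) * sqrt (\<Sum>l\<in>A. x l)"
    using assms by (simp add: L2_set_def)
  finally show ?thesis .
qed

context
  fixes P :: "complex mat" and d :: nat
  assumes P: "P \<in> carrier_mat d d" and P_adj: "mat_adjoint P = P" and P_idem: "P * P = P"
begin

lemma frob_sq_projector_mult:
  assumes X: "X \<in> carrier_mat d d"
  shows "frob_sq (P * X) = Re (mtrace (P * (X * mat_adjoint X)))"
proof -
  have Xa: "mat_adjoint X \<in> carrier_mat d d" using X by (rule mat_adjoint_carrier_mat)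
  have "mat_adjoint (P * X) * (P * X) = mat_adjoint X * (P * P * X)"
    using P X Xa
    by (simp add: mat_adjoint_mult[of _ d d _ d] P_adj assoc_mult_mat_square[of _ d] mult_carrier_mat_square[of _ d])
  then have "frob_sq (P * X) = Re (mtrace (mat_adjoint X * (P * X)))"
    by (simp add: frob_sq_def P_idem)
  also have "mtrace (mat_adjoint X * (P * X)) = mtrace ((P * X) * mat_adjoint X)"
    using P X Xa by (intro mtrace_mult_commute[of _ d d]) (auto simp: mult_carrier_mat_square)
  also have "(P * X) * mat_adjoint X = P * (X * mat_adjoint X)"
    using P X Xa by (simp add: assoc_mult_mat_square[of _ d])
  finally show ?thesis .
qed

lemma norm_mtrace_projector_mult_le:
  assumes X: "X \<in> carrier_mat d d" and tr: "mtrace P = 1"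
  shows "cmod (mtrace (P * X)) \<le> frob_norm (P * X)"
proof -
  have "P * X = P * (P * X)" using P X P_idem by (simp add: assoc_mult_mat_square[of _ d, symmetric])
  then have "cmod (mtrace (P * X)) = cmod (mtrace (P * (P * X)))" by simp
  also have "\<dots> \<le> frob_norm P * frob_norm (P * X)"
    using P X by (intro norm_mtrace_mult_le[of _ d d]) (auto simp: mult_carrier_mat_square)
  also have "frob_norm P = 1"
    using tr by (simp add: frob_norm_def frob_sq_def P_adj P_idem)
  finally show ?thesis by simp
qed

end

lemma frob_sq_involution_mult:
  assumes N: "N \<in> carrier_mat d d" and N_adj: "mat_adjoint N = N" and N_sq: "N * N = 1\<^sub>m d"
    and C: "C \<in> carrier_mat d d"
  shows "Re (mtrace ((N * C) * mat_adjoint (N * C))) = frob_sq C"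
proof -
  have X: "N * C \<in> carrier_mat d d" using N C by (simp add: mult_carrier_mat_square)
  have Xa: "mat_adjoint (N * C) \<in> carrier_mat d d" using X by (rule mat_adjoint_carrier_mat)
  have Ca: "mat_adjoint C \<in> carrier_mat d d" using C by (rule mat_adjoint_carrier_mat)
  have "mtrace ((N * C) * mat_adjoint (N * C)) = mtrace (mat_adjoint (N * C) * (N * C))"
    using X Xa by (rule mtrace_mult_commute)
  also have "mat_adjoint (N * C) * (N * C) = mat_adjoint C * ((N * N) * C)"
    using N C Ca
    by (simp add: mat_adjoint_mult[of _ d d _ d] N_adj assoc_mult_mat_square[of _ d] mult_carrier_mat_square[of _ d])
  also have "\<dots> = mat_adjoint C * C" using C by (simp add: N_sq)
  finally show ?thesis by (simp add: frob_sq_def)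
qed

section \<open>The product basis\<close>

definition basis_qubit_dm :: "(nat \<Rightarrow> nat \<Rightarrow> real) \<Rightarrow> nat \<Rightarrow> nat \<Rightarrow> complex mat" where
  "basis_qubit_dm nperp l j = bloch_dm (\<lambda>k. (-1) ^ qbit l j * nperp (j + 1) k)"

lemma basis_qubit_dm_carrier_mat [simp]: "basis_qubit_dm nperp l j \<in> carrier_mat 2 2"
  by (simp add: basis_qubit_dm_def)

lemma basis_dm_eq_tensor: "basis_dm n nperp l = tensor n (basis_qubit_dm nperp l)"
  unfolding basis_dm_def by (rule tensor_cong) (simp add: basis_qubit_dm_def)

lemma basis_dm_carrier_mat [simp]: "basis_dm n nperp l \<in> carrier_mat (2^n) (2^n)"
  by (simp add: basis_dm_eq_tensor)

lemma basis_dm_idem: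
  assumes "\<forall>j\<in>{1..n}. (\<Sum>k<3. (nperp j k)\<^sup>2) = 1"
  shows "basis_dm n nperp l * basis_dm n nperp l = basis_dm n nperp l"
proof -
  have "basis_qubit_dm nperp l j * basis_qubit_dm nperp l j = basis_qubit_dm nperp l j" if "j < n" for j
  proof -
    have "(\<Sum>k<3. (nperp (j+1) k)\<^sup>2) = 1" using assms that by simp
    then have "(nperp (j+1) 0)\<^sup>2 + (nperp (j+1) 1)\<^sup>2 + (nperp (j+1) 2)\<^sup>2 = 1"
      by (simp add: numeral_3_eq_3 numeral_2_eq_2)
    moreover have "((-1::real) ^ q)\<^sup>2 = 1" for q
      by (simp add: power_even_eq[symmetric] mult.commute)
    ultimately show ?thesis
      unfolding basis_qubit_dm_def by (intro bloch_dm_idem) (simp add: power_mult_distrib)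
  qed
  then show ?thesis unfolding basis_dm_eq_tensor by (simp add: tensor_mult cong: tensor_cong)
qed

lemma basis_dm_adjoint: "mat_adjoint (basis_dm n nperp l) = basis_dm n nperp l"
proof -
  have "mat_adjoint (tensor n (basis_qubit_dm nperp l))
      = tensor n (\<lambda>j. mat_adjoint (basis_qubit_dm nperp l j))"
    by (rule mat_adjoint_tensor) simp
  also have "\<dots> = tensor n (basis_qubit_dm nperp l)"
    by (rule tensor_cong) (simp add: basis_qubit_dm_def bloch_dm_adjoint)
  finally show ?thesis unfolding basis_dm_eq_tensor .
qed

lemma mtrace_basis_dm: "mtrace (basis_dm n nperp l) = 1"
  unfolding basis_dm_eq_tensor
  by (simp add: mtrace_tensor basis_qubit_dm_def bloch_dm_index add_divide_distrib[symmetric])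

lemma sum_basis_dm_index:
  assumes "i < 2^n" "k < 2^n"
  shows "(\<Sum>l<2^n. basis_dm n nperp l $$ (i,k)) = (1\<^sub>m (2^n) :: complex mat) $$ (i,k)"
proof -
  define G where "G j b = bloch_dm (\<lambda>q. (-1) ^ b * nperp (j + 1) q) $$ (qbit i j, qbit k j)" for j b
  have "(\<Sum>l<2^n. basis_dm n nperp l $$ (i,k)) = (\<Sum>l<2^n. \<Prod>j<n. G j (qbit l j))"
    using assms by (simp add: basis_dm_def tensor_index G_def)
  also have "\<dots> = (\<Prod>j<n. G j 0 + G j 1)" by (rule sum_pow2_prod_qbit)
  also have "\<dots> = (\<Prod>j<n. (1\<^sub>m 2 :: complex mat) $$ (qbit i j, qbit k j))"
  proof (rule prod.cong)
    fix j
    have "qbit i j = 0 \<or> qbit i j = 1" "qbit k j = 0 \<or> qbit k j = 1"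
      using qbit_less_2[of i j] qbit_less_2[of k j] by auto
    then show "G j 0 + G j 1 = (1\<^sub>m 2 :: complex mat) $$ (qbit i j, qbit k j)"
      unfolding G_def by (auto simp: bloch_dm_index add_divide_distrib[symmetric])
  qed simp
  also have "\<dots> = tensor n (\<lambda>j. 1\<^sub>m 2) $$ (i,k)" using assms by (simp add: tensor_index)
  finally show ?thesis by (simp add: tensor_one)
qed

lemma sum_mtrace_basis_dm_mult:
  assumes W: "W \<in> carrier_mat (2^n) (2^n)"
  shows "(\<Sum>l<2^n. mtrace (basis_dm n nperp l * W)) = mtrace W"
proof -
  have "(\<Sum>l<2^n. mtrace (basis_dm n nperp l * W))
     = (\<Sum>l<2^n. \<Sum>i<2^n. \<Sum>k<2^n. basis_dm n nperp l $$ (i,k) * W $$ (k,i))"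
    using W by (simp add: mtrace_mult[of _ "2^n" "2^n"])
  also have "\<dots> = (\<Sum>i<2^n. \<Sum>l<2^n. \<Sum>k<2^n. basis_dm n nperp l $$ (i,k) * W $$ (k,i))"
    by (rule sum.swap)
  also have "\<dots> = (\<Sum>i<2^n. \<Sum>k<2^n. \<Sum>l<2^n. basis_dm n nperp l $$ (i,k) * W $$ (k,i))"
    by (rule sum.cong[OF refl], rule sum.swap)
  also have "\<dots> = (\<Sum>i<2^n. \<Sum>k<2^n. (\<Sum>l<2^n. basis_dm n nperp l $$ (i,k)) * W $$ (k,i))"
    by (simp add: sum_distrib_right)
  also have "\<dots> = (\<Sum>i<2^n. \<Sum>k<2^n. (1\<^sub>m (2^n) :: complex mat) $$ (i,k) * W $$ (k,i))"
    by (simp add: sum_basis_dm_index)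
  also have "\<dots> = (\<Sum>i<2^n. W $$ (i,i))"
  proof (intro sum.cong refl)
    fix i assume i: "i \<in> {..<(2::nat)^n}"
    have "(\<Sum>k<2^n. (1\<^sub>m (2^n) :: complex mat) $$ (i,k) * W $$ (k,i))
        = (\<Sum>k<2^n. if k = i then W $$ (k,i) else 0)"
      using i by (intro sum.cong) auto
    also have "\<dots> = W $$ (i,i)" using i by (simp add: sum.delta)
    finally show "(\<Sum>k<2^n. (1\<^sub>m (2^n) :: complex mat) $$ (i,k) * W $$ (k,i)) = W $$ (i,i)" .
  qed
  also have "\<dots> = mtrace W" using W by (simp add: mtrace_def)
  finally show ?thesis .
qed

text \<open>Both sides replace the factor of the basis state on qubit \<open>s\<close> by the maximally mixed state.\<close>

lemma depol_basis_dm: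
  assumes s: "s \<in> {1..n}" and v: "(\<Sum>k<3. (v k)\<^sup>2) = 1" and orth: "(\<Sum>k<3. nperp s k * v k) = 0"
  shows "depol n s (basis_dm n nperp l)
    = (1/2::complex) \<cdot>\<^sub>m (basis_dm n nperp l + ndot_sigma n s v * basis_dm n nperp l * ndot_sigma n s v)"
proof -
  define p where "p = s - 1"
  define F where "F = basis_qubit_dm nperp l"
  define m where "m = (\<lambda>k. (-1) ^ qbit l p * nperp s k)"
  have p: "p < n" using s by (auto simp: p_def)
  have Fc: "F p \<in> carrier_mat 2 2" by (simp add: F_def)
  have Fp: "F p = bloch_dm m" using s by (simp add: F_def basis_qubit_dm_def m_def p_def)
  have rho: "basis_dm n nperp l = tensor n (F(p := F p))" by (simp add: basis_dm_eq_tensor F_def)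
  have conj: "tensor n (site_factors p A) * basis_dm n nperp l * tensor n (site_factors p A)
      = tensor n (F(p := A * F p * A))" if "A \<in> carrier_mat 2 2" for A
    using p that by (simp add: basis_dm_eq_tensor F_def tensor_site_factors_conj)
  have v3: "(v 0)\<^sup>2 + (v 1)\<^sup>2 + (v 2)\<^sup>2 = 1" using v by (simp add: numeral_3_eq_3 numeral_2_eq_2)
  have "m 0 * v 0 + m 1 * v 1 + m 2 * v 2 = (-1) ^ qbit l p * (\<Sum>k<3. nperp s k * v k)"
    by (simp add: m_def numeral_3_eq_3 numeral_2_eq_2 algebra_simps)
  then have mv: "m 0 * v 0 + m 1 * v 1 + m 2 * v 2 = 0" using orth by simp
  have "depol n s (basis_dm n nperp l) = (1/4::complex) \<cdot>\<^sub>m (tensor n (F(p := F p))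
      + tensor n (F(p := pauli 0 * F p * pauli 0)) + tensor n (F(p := pauli 1 * F p * pauli 1))
      + tensor n (F(p := pauli 2 * F p * pauli 2)))"
    unfolding depol_def sigma_eq_tensor p_def[symmetric] by (simp only: conj pauli_carrier_mat flip: rho)
  also have "\<dots> = tensor n (F(p := (1/4::complex) \<cdot>\<^sub>m
      (F p + pauli 0 * F p * pauli 0 + pauli 1 * F p * pauli 1 + pauli 2 * F p * pauli 2)))"
    using p Fc
    by (simp add: tensor_upd_add tensor_upd_smult assoc_add_mat[of _ "2^n" "2^n"] del: fun_upd_triv)
  also have "\<dots> = tensor n (F(p := (1/2::complex) \<cdot>\<^sub>m (F p + pauli_dot v * F p * pauli_dot v)))"
    unfolding Fp twirl_bloch_dm average_reflect_bloch_dm[OF v3 mv] ..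
  also have "\<dots> = (1/2::complex) \<cdot>\<^sub>m (tensor n (F(p := F p)) + tensor n (F(p := pauli_dot v * F p * pauli_dot v)))"
    using p Fc
    by (simp add: tensor_upd_add tensor_upd_smult assoc_add_mat[of _ "2^n" "2^n"] del: fun_upd_triv)
  also have "\<dots> = (1/2::complex) \<cdot>\<^sub>m (basis_dm n nperp l + ndot_sigma n s v * basis_dm n nperp l * ndot_sigma n s v)"
    unfolding ndot_sigma_eq_tensor[OF s] p_def[symmetric] by (simp only: conj pauli_dot_carrier_mat flip: rho)
  finally show ?thesis .
qed

lemma sum_frob_sq_basis_dm_mult:
  assumes unit: "\<forall>j\<in>{1..n}. (\<Sum>k<3. (nperp j k)\<^sup>2) = 1" and X: "X \<in> carrier_mat (2^n) (2^n)"
  shows "(\<Sum>l<2^n. frob_sq (basis_dm n nperp l * X)) = Re (mtrace (X * mat_adjoint X))"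
proof -
  have "(\<Sum>l<2^n. frob_sq (basis_dm n nperp l * X))
      = Re (\<Sum>l<2^n. mtrace (basis_dm n nperp l * (X * mat_adjoint X)))"
    using frob_sq_projector_mult[OF basis_dm_carrier_mat basis_dm_adjoint basis_dm_idem[OF unit] X]
    by simp
  also have "\<dots> = Re (mtrace (X * mat_adjoint X))"
    using X by (subst sum_mtrace_basis_dm_mult) (auto simp: mult_carrier_mat_square mat_adjoint_carrier_mat)
  finally show ?thesis .
qed

section \<open>Depolarization\<close>

lemma depol_carrier_mat [simp]: "Y \<in> carrier_mat (2^n) (2^n) \<Longrightarrow> depol n s Y \<in> carrier_mat (2^n) (2^n)"
  unfolding depol_def by (simp add: mult_carrier_mat_square[of _ "2^n"])

lemma foldr_depol_carrier_mat:
  "X \<in> carrier_mat (2^n) (2^n) \<Longrightarrow> foldr (depol n) L X \<in> carrier_mat (2^n) (2^n)"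
  by (induction L) auto

lemma commutator_carrier_mat [simp]:
  "A \<in> carrier_mat d d \<Longrightarrow> B \<in> carrier_mat d d \<Longrightarrow> commutator A B \<in> carrier_mat d d"
  unfolding commutator_def by (simp add: mult_carrier_mat_square minus_carrier_mat)

lemma mtrace_mult_depol:
  assumes A: "A \<in> carrier_mat (2^n) (2^n)" and Y: "Y \<in> carrier_mat (2^n) (2^n)"
  shows "mtrace (A * depol n s Y) = mtrace (depol n s A * Y)"
proof -
  let ?d = "2^n"
  let ?S = "sigma n s"
  note c = A Y sigma_carrier_mat mult_carrier_mat_square[of _ ?d] add_carrier_mat
  have L: "mtrace (A * depol n s Y) = 1/4 * (mtrace (A * Y) + mtrace (A * (?S 0 * Y * ?S 0))
     + mtrace (A * (?S 1 * Y * ?S 1)) + mtrace (A * (?S 2 * Y * ?S 2)))"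
    unfolding depol_def using c
    by (simp add: mtrace_mult_smult_right[of _ ?d] mtrace_mult_add_right[of _ ?d] mult_carrier_mat_square[of _ ?d])
  have R: "mtrace (depol n s A * Y) = 1/4 * (mtrace (A * Y) + mtrace ((?S 0 * A * ?S 0) * Y)
     + mtrace ((?S 1 * A * ?S 1) * Y) + mtrace ((?S 2 * A * ?S 2) * Y))"
    unfolding depol_def using c
    by (simp add: mtrace_mult_smult_left[of _ ?d] mtrace_mult_add_left[of _ ?d] mult_carrier_mat_square[of _ ?d])
  show ?thesis unfolding L R using A Y by (simp add: mtrace_mult_conj[of _ ?d])
qed

lemma basis_expval_diff_depol:
  assumes s: "s \<in> {1..n}" and v: "(\<Sum>k<3. (v k)\<^sup>2) = 1" and orth: "(\<Sum>k<3. nperp s k * v k) = 0"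
    and Y: "Y \<in> carrier_mat (2^n) (2^n)"
  shows "mtrace (basis_dm n nperp l * Y) - mtrace (basis_dm n nperp l * depol n s Y)
     = 1/2 * mtrace (basis_dm n nperp l * (ndot_sigma n s v * commutator (ndot_sigma n s v) Y))"
proof -
  let ?d = "2^n"
  let ?N = "ndot_sigma n s v"
  let ?r = "basis_dm n nperp l"
  have N: "?N \<in> carrier_mat ?d ?d" and r: "?r \<in> carrier_mat ?d ?d" by simp_all
  have twirl: "mtrace (?r * depol n s Y) = 1/2 * (mtrace (?r * Y) + mtrace (?r * (?N * Y * ?N)))"
  proof -
    have "mtrace (?r * depol n s Y) = mtrace (depol n s ?r * Y)" using Y by (simp add: mtrace_mult_depol)
    also have "\<dots> = mtrace (((1/2::complex) \<cdot>\<^sub>m (?r + ?N * ?r * ?N)) * Y)"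
      using depol_basis_dm[of s n v nperp l, OF s v orth] by simp
    also have "\<dots> = 1/2 * (mtrace (?r * Y) + mtrace ((?N * ?r * ?N) * Y))"
      using Y N r
      by (simp add: mtrace_mult_smult_left[of _ ?d] mtrace_mult_add_left[of _ ?d] mult_carrier_mat_square[of _ ?d])
    also have "mtrace ((?N * ?r * ?N) * Y) = mtrace (?r * (?N * Y * ?N))"
      using Y N r by (simp add: mtrace_mult_conj[of _ ?d])
    finally show ?thesis .
  qed
  have "?N * commutator ?N Y = Y - ?N * Y * ?N"
  proof -
    have "?N * commutator ?N Y = (?N * ?N) * Y - ?N * (Y * ?N)"
      unfolding commutator_def using N Y
      by (simp add: mult_minus_distrib_mat[of _ ?d ?d _ ?d] assoc_mult_mat_square[of _ ?d] mult_carrier_mat_square[of _ ?d])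
    then show ?thesis using N Y ndot_sigma_square[OF s v] by (simp add: assoc_mult_mat_square[of _ ?d])
  qed
  then have comm: "mtrace (?r * (?N * commutator ?N Y)) = mtrace (?r * Y) - mtrace (?r * (?N * Y * ?N))"
    using N Y r
    by (simp add: mtrace_mult_diff_right[of _ ?d] mult_carrier_mat_square[of _ ?d] assoc_mult_mat_square[of _ ?d])
  show ?thesis unfolding twirl comm by (simp add: field_simps)
qed

lemma sum_norm_basis_expval_diff_depol_le:
  assumes s: "s \<in> {1..n}" and v: "(\<Sum>k<3. (v k)\<^sup>2) = 1" and orth: "(\<Sum>k<3. nperp s k * v k) = 0"
    and unit: "\<forall>j\<in>{1..n}. (\<Sum>k<3. (nperp j k)\<^sup>2) = 1"
    and Y: "Y \<in> carrier_mat (2^n) (2^n)"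
  shows "(\<Sum>l<2^n. cmod (mtrace (basis_dm n nperp l * Y) - mtrace (basis_dm n nperp l * depol n s Y)))
    \<le> 2^n * sqrt (frob_sq (commutator (ndot_sigma n s v) Y) / 2^(n+2))"
proof -
  let ?d = "2^n"
  let ?N = "ndot_sigma n s v"
  let ?r = "basis_dm n nperp"
  define C where "C = commutator ?N Y"
  define X where "X = ?N * C"
  have C_carrier: "C \<in> carrier_mat ?d ?d" using Y by (simp add: C_def)
  have X_carrier: "X \<in> carrier_mat ?d ?d" using C_carrier by (simp add: X_def mult_carrier_mat_square)
  define x where "x l = frob_sq (?r l * X)" for l
  have x_nonneg: "0 \<le> x l" for l
    using X_carrier by (simp add: x_def frob_sq_nonneg[of _ ?d ?d] mult_carrier_mat_square)
  have proj: "?r l \<in> carrier_mat ?d ?d" "mat_adjoint (?r l) = ?r l" "?r l * ?r l = ?r l" for l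
    using basis_dm_idem[OF unit] by (simp_all add: basis_dm_adjoint)
  have "(\<Sum>l<2^n. cmod (mtrace (?r l * Y) - mtrace (?r l * depol n s Y)))
      = (\<Sum>l<2^n. 1/2 * cmod (mtrace (?r l * X)))"
    by (simp add: basis_expval_diff_depol[of s n v nperp Y, OF s v orth Y] X_def C_def norm_mult)
  also have "\<dots> \<le> (\<Sum>l<2^n. 1/2 * sqrt (x l))"
    using norm_mtrace_projector_mult_le[OF proj X_carrier mtrace_basis_dm]
    by (intro sum_mono mult_left_mono) (auto simp: x_def frob_norm_def)
  also have "\<dots> = 1/2 * (\<Sum>l<2^n. sqrt (x l))" by (simp add: sum_distrib_left)
  also have "\<dots> \<le> 1/2 * (sqrt (2^n) * sqrt (\<Sum>l<2^n. x l))"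
    using sum_sqrt_le_sqrt_card_mult[of "{..<2^n}" x] x_nonneg by simp
  also have "(\<Sum>l<2^n. x l) = frob_sq C"
    using sum_frob_sq_basis_dm_mult[OF unit X_carrier]
      frob_sq_involution_mult[OF ndot_sigma_carrier_mat ndot_sigma_adjoint[OF s] ndot_sigma_square[OF s v] C_carrier]
    by (simp add: x_def X_def)
  also have "1/2 * (sqrt (2^n) * sqrt (frob_sq C)) = 2^n * sqrt (frob_sq C / 2^(n+2))"
  proof -
    have "sqrt ((2::real)^(n+2)) = 2 * sqrt (2^n)" by (simp add: power_add real_sqrt_mult)
    moreover have "(2::real)^n = sqrt (2^n) * sqrt (2^n)" by simp
    ultimately show ?thesis by (simp add: real_sqrt_divide field_simps)
  qed
  finally show ?thesis by (simp add: C_def)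
qed

lemma commutator_add:
  assumes "N \<in> carrier_mat d d" "A \<in> carrier_mat d d" "B \<in> carrier_mat d d"
  shows "commutator N (A + B) = commutator N A + commutator N B"
proof -
  have "commutator N (A + B) = (N * A + N * B) - (A * N + B * N)"
    unfolding commutator_def using assms
    by (simp add: mult_add_distrib_mat[of _ d d _ d] add_mult_distrib_mat[of _ d d _ _ d])
  also have "\<dots> = commutator N A + commutator N B"
    unfolding commutator_def using assms by (intro eq_matI) (auto simp: mult_carrier_mat_square[of _ d])
  finally show ?thesis .
qed

lemma commutator_smult:
  assumes "N \<in> carrier_mat d d" "A \<in> carrier_mat d d"
  shows "commutator N (c \<cdot>\<^sub>m A) = c \<cdot>\<^sub>m commutator N A"
  unfolding commutator_def using assms
  by (intro eq_matI)
    (auto simp: mult_smult_distrib[of _ d d _ d] mult_smult_assoc_mat[of _ d d _ d] algebra_simps)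

lemma commutator_conj:
  assumes N: "N \<in> carrier_mat d d" and S: "S \<in> carrier_mat d d" and X: "X \<in> carrier_mat d d"
    and NS: "N * S = S * N"
  shows "commutator N (S * X * S) = S * commutator N X * S"
proof -
  note assoc = assoc_mult_mat_square[of _ d] mult_carrier_mat_square[of _ d]
  have "N * (S * X * S) = (N * S) * X * S" using N S X by (simp add: assoc)
  also have "\<dots> = S * (N * X) * S" using N S X NS by (simp add: assoc)
  finally have left: "N * (S * X * S) = S * (N * X) * S" .
  have "(S * X * S) * N = S * X * (S * N)" using N S X by (simp add: assoc)
  also have "\<dots> = S * (X * N) * S" using N S X NS by (simp add: assoc)
  finally have right: "(S * X * S) * N = S * (X * N) * S" .
  have "S * (N * X - X * N) * S = S * (N * X) * S - S * (X * N) * S"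
    using N S X
    by (simp add: mult_minus_distrib_mat[of _ d d _ d] minus_mult_distrib_mat[of _ d d _ _ d]
        mult_carrier_mat_square[of _ d] minus_carrier_mat)
  then show ?thesis unfolding commutator_def left right ..
qed

lemma commutator_depol:
  assumes N: "N \<in> carrier_mat (2^n) (2^n)" and X: "X \<in> carrier_mat (2^n) (2^n)"
    and NS: "\<And>k. N * sigma n s k = sigma n s k * N"
  shows "commutator N (depol n s X) = depol n s (commutator N X)"
proof -
  let ?d = "2^n"
  let ?A = "\<lambda>k. sigma n s k * X * sigma n s k"
  have A: "?A k \<in> carrier_mat ?d ?d" for k using X by (simp add: mult_carrier_mat_square)
  have "commutator N (depol n s X) = (1/4) \<cdot>\<^sub>m commutator N (X + ?A 0 + ?A 1 + ?A 2)"
    unfolding depol_def using N X A by (intro commutator_smult[of _ ?d]) auto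
  also have "commutator N (X + ?A 0 + ?A 1 + ?A 2)
     = commutator N X + commutator N (?A 0) + commutator N (?A 1) + commutator N (?A 2)"
    using N X A by (simp add: commutator_add[of _ ?d] assoc_add_mat[of _ ?d ?d])
  also have "\<dots> = commutator N X + sigma n s 0 * commutator N X * sigma n s 0
      + sigma n s 1 * commutator N X * sigma n s 1 + sigma n s 2 * commutator N X * sigma n s 2"
    using N X NS by (simp add: commutator_conj[of _ ?d])
  finally show ?thesis unfolding depol_def .
qed

text \<open>\<open>depol n s\<close> is an average of four Frobenius isometries, hence a Frobenius contraction.\<close>

lemma frob_norm_depol_le:
  assumes Z: "Z \<in> carrier_mat (2^n) (2^n)"
  shows "frob_norm (depol n s Z) \<le> frob_norm Z"
proof -
  let ?d = "2^n"
  let ?A = "\<lambda>k. sigma n s k * Z * sigma n s k"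
  have A: "?A k \<in> carrier_mat ?d ?d" for k using Z by (simp add: mult_carrier_mat_square)
  have iso: "frob_norm (?A k) = frob_norm Z" for k
    using Z by (intro frob_norm_conj_involution) (auto simp: sigma_adjoint sigma_square)
  have "frob_norm (depol n s Z) = cmod (1/4) * frob_norm (Z + ?A 0 + ?A 1 + ?A 2)"
    unfolding depol_def using Z A by (intro frob_norm_smult[of _ ?d ?d]) auto
  also have "frob_norm (Z + ?A 0 + ?A 1 + ?A 2) \<le> frob_norm Z + frob_norm (?A 0) + frob_norm (?A 1) + frob_norm (?A 2)"
  proof -
    have "frob_norm (Z + ?A 0 + ?A 1 + ?A 2) \<le> frob_norm (Z + ?A 0 + ?A 1) + frob_norm (?A 2)"
      using Z A by (intro frob_norm_triangle[of _ ?d ?d]) auto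
    also have "frob_norm (Z + ?A 0 + ?A 1) \<le> frob_norm (Z + ?A 0) + frob_norm (?A 1)"
      using Z A by (intro frob_norm_triangle[of _ ?d ?d]) auto
    also have "frob_norm (Z + ?A 0) \<le> frob_norm Z + frob_norm (?A 0)"
      using Z A by (intro frob_norm_triangle[of _ ?d ?d]) auto
    finally show ?thesis by simp
  qed
  finally show ?thesis by (simp add: iso)
qed

lemma frob_sq_commutator_foldr_depol_le:
  assumes s: "s \<in> {1..n}" and L: "set L \<subseteq> {1..n}" "s \<notin> set L" and X: "X \<in> carrier_mat (2^n) (2^n)"
  shows "frob_sq (commutator (ndot_sigma n s v) (foldr (depol n) L X)) \<le> frob_sq (commutator (ndot_sigma n s v) X)"
  using L
proof (induction L)
  case Nil
  then show ?case by simp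
next
  case (Cons a L)
  let ?N = "ndot_sigma n s v" and ?Y = "foldr (depol n) L X"
  have Y: "?Y \<in> carrier_mat (2^n) (2^n)" using X by (rule foldr_depol_carrier_mat)
  have "frob_norm (commutator ?N (depol n a ?Y)) = frob_norm (depol n a (commutator ?N ?Y))"
    using Y s Cons.prems by (simp add: commutator_depol ndot_sigma_commute_sigma)
  also have "\<dots> \<le> frob_norm (commutator ?N ?Y)"
    using Y by (intro frob_norm_depol_le) simp
  finally have "frob_sq (commutator ?N (depol n a ?Y)) \<le> frob_sq (commutator ?N ?Y)"
    by (simp add: frob_norm_def)
  also have "\<dots> \<le> frob_sq (commutator ?N X)" using Cons by auto
  finally show ?case by simp
qed

section \<open>Telescoping over the depolarized qubits\<close>

definition basis_deviation :: "nat \<Rightarrow> (nat \<Rightarrow> nat \<Rightarrow> real) \<Rightarrow> complex mat \<Rightarrow> complex mat \<Rightarrow> real" where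
  "basis_deviation n nperp X Y
     = (\<Sum>l<2^n. cmod (mtrace (basis_dm n nperp l * X) - mtrace (basis_dm n nperp l * Y)))"

lemma basis_deviation_triangle:
  "basis_deviation n nperp X Z \<le> basis_deviation n nperp X Y + basis_deviation n nperp Y Z"
  unfolding basis_deviation_def sum.distrib[symmetric]
  by (rule sum_mono) (metis diff_add_cancel add_diff_eq norm_triangle_ineq4 norm_triangle_ineq)

lemma basis_deviation_foldr_depol_le:
  assumes S_sub: "S \<subseteq> {1..n}"
    and n_unit: "\<forall>s\<in>S. (\<Sum>k<3. (nv s k)\<^sup>2) = 1"
    and perp_unit: "\<forall>j\<in>{1..n}. (\<Sum>k<3. (nperp j k)\<^sup>2) = 1"
    and perp_orth: "\<forall>j\<in>S. (\<Sum>k<3. nperp j k * nv j k) = 0"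
    and X: "X \<in> carrier_mat (2^n) (2^n)"
    and "distinct L" "set L \<subseteq> S"
  shows "basis_deviation n nperp X (foldr (depol n) L X)
    \<le> (\<Sum>s\<in>set L. 2^n * sqrt (frob_sq (commutator (ndot_sigma n s (nv s)) X) / 2^(n+2)))"
  using assms(6,7)
proof (induction L)
  case Nil
  then show ?case by (simp add: basis_deviation_def)
next
  case (Cons a L)
  let ?Y = "foldr (depol n) L X"
  let ?bound = "\<lambda>s Z. 2^n * sqrt (frob_sq (commutator (ndot_sigma n s (nv s)) Z) / 2^(n+2))"
  have a: "a \<in> S" "a \<in> {1..n}" "a \<notin> set L" using Cons.prems S_sub by auto
  have Y: "?Y \<in> carrier_mat (2^n) (2^n)" using X by (rule foldr_depol_carrier_mat)
  have "basis_deviation n nperp X (depol n a ?Y)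
      \<le> basis_deviation n nperp X ?Y + basis_deviation n nperp ?Y (depol n a ?Y)"
    by (rule basis_deviation_triangle)
  also have "basis_deviation n nperp X ?Y \<le> (\<Sum>s\<in>set L. ?bound s X)"
    using Cons by auto
  also have "basis_deviation n nperp ?Y (depol n a ?Y) \<le> ?bound a ?Y"
    unfolding basis_deviation_def using a n_unit perp_orth perp_unit Y
    by (intro sum_norm_basis_expval_diff_depol_le) auto
  also have "\<dots> \<le> ?bound a X"
    using a Cons.prems S_sub X
    by (intro mult_left_mono real_sqrt_le_mono divide_right_mono frob_sq_commutator_foldr_depol_le) auto
  finally show ?case using a by (simp add: add.commute)
qed

text \<open>The matchgate structure of \<open>U\<close>, the Majorana form of \<open>B\<close> and its hermiticity only enter
  through the matrices \<open>M\<^sub>s\<close>: the bound holds for every observable.\<close>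

theorem theorem2:
  fixes n :: nat and U :: "complex mat" and \<alpha> :: "nat list" and b :: int
    and S :: "nat set" and nv :: "nat \<Rightarrow> nat \<Rightarrow> real" and M :: "nat \<Rightarrow> nat \<Rightarrow> nat \<Rightarrow> real"
    and nperp :: "nat \<Rightarrow> nat \<Rightarrow> real"
  defines "B \<equiv> (\<i> powi b) \<cdot>\<^sub>m majorana_prod n \<alpha>"
  defines "Obs \<equiv> mat_adjoint U * B * U"
  assumes mg: "matchgate n U"
    and cfg: "majorana_config n \<alpha>"
    and herm: "mat_adjoint B = B"
    and S_sub: "S \<subseteq> {1..n}"
    and n_unit: "\<forall>s\<in>S. (\<Sum>k<3. (nv s k)\<^sup>2) = 1"
    and M_def: "\<forall>s\<in>S. \<forall>v :: nat \<Rightarrow> real.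
        frob_sq (commutator (ndot_sigma n s v) Obs) / 2 ^ (n + 2)
          = (\<Sum>a<3. \<Sum>c<3. v a * M s a c * v c)"
    and perp_unit: "\<forall>j\<in>{1..n}. (\<Sum>k<3. (nperp j k)\<^sup>2) = 1"
    and perp_orth: "\<forall>j\<in>S. (\<Sum>k<3. nperp j k * nv j k) = 0"
  shows "(\<Sum>l<2 ^ n. cmod (expval (basis_dm n nperp l) Obs
             - expval (basis_dm n nperp l) (depol_set n S Obs))) / 2 ^ n
         \<le> (\<Sum>s\<in>S. sqrt (\<Sum>a<3. \<Sum>c<3. nv s a * M s a c * nv s c))"
proof -
  have U: "U \<in> carrier_mat (2^n) (2^n)" using mg by (simp add: matchgate_def unitary_mat_def)
  then have Obs: "Obs \<in> carrier_mat (2^n) (2^n)"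
    unfolding Obs_def by (intro carrier_matI) (auto dest: carrier_matD)
  have fin: "finite S" using S_sub finite_subset by blast
  have "(\<Sum>l<2 ^ n. cmod (expval (basis_dm n nperp l) Obs - expval (basis_dm n nperp l) (depol_set n S Obs)))
      = basis_deviation n nperp Obs (foldr (depol n) (sorted_list_of_set S) Obs)"
    by (simp add: basis_deviation_def expval_def depol_set_def)
  also have "\<dots> \<le> (\<Sum>s\<in>S. 2^n * sqrt (frob_sq (commutator (ndot_sigma n s (nv s)) Obs) / 2^(n+2)))"
    using basis_deviation_foldr_depol_le[OF S_sub n_unit perp_unit perp_orth Obs, of "sorted_list_of_set S"] fin
    by simp
  also have "\<dots> = 2^n * (\<Sum>s\<in>S. sqrt (\<Sum>a<3. \<Sum>c<3. nv s a * M s a c * nv s c))"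
    using M_def by (simp add: sum_distrib_left)
  finally show ?thesis by (simp add: field_simps)
qed

end
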